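(* Let $d\ge1$, $A,B\in\mathbb R^{d\times d}$ with $BB^*$ invertible, and define for $u,v\in[0,1]$ $$C_0(u,v)=e^{uA}\Bigl(\int_0^{u\wedge v}e^{-rA}BB^*e^{-rA^*}\,dr\Bigr)e^{vA^*}.$$ Let $L$ be the differential operator $L=(\partial_u+A^* )(BB^* )^{-1}(\partial_u-A)$ acting on $\mathbb R^d$-valued functions of $u$, and let $\mathcal L$ denote $L$ with domain $\mathcal D(\mathcal L)=\{f\in H^2([0,1],\mathbb R^d): f(0)=0,\ f'(1)=Af(1)\}$. Then $C_0$ is the Green's function of $-\mathcal L$, that is, for each $v\in(0,1)$, $$L C_0(u,v)=-\delta(u-v)I$$ (as a distribution in $u$), and $$C_0(0,v)=0,\qquad \partial_uC_0(1,v)=A\,C_0(1,v)\qquad\text{for all }v\in(0,1).$$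
   Context: $C_0$ is the covariance function of the solution of the SDE $dX=AX\,du+B\,dW$ on $[0,1]$ with $X(0)=0$, where $W$ is a standard $d$-dimensional Brownian motion. $\delta$ denotes the Dirac delta and $I$ the $d\times d$ identity matrix. *)

theory Defs
  imports "HOL-Analysis.Analysis"
begin

primrec matpow :: "real^'n^'n \<Rightarrow> nat \<Rightarrow> real^'n^'n" where
  "matpow M 0 = mat 1"
| "matpow M (Suc k) = M ** matpow M k"

definition mexp :: "real^'n^'n \<Rightarrow> real^'n^'n" where
  "mexp M = (\<Sum>k. scaleR (1 / fact k) (matpow M k))"

definition C0 :: "real^'n^'n \<Rightarrow> real^'n^'n \<Rightarrow> real \<Rightarrow> real \<Rightarrow> real^'n^'n" where
  "C0 A B u v =
     mexp (scaleR u A) **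
     integral {0..min u v}
       (\<lambda>r. mexp (-(scaleR r A)) ** (B ** transpose B) ** mexp (-(scaleR r (transpose A))))
     ** mexp (scaleR v (transpose A))"

definition test_fun :: "(real \<Rightarrow> real) \<Rightarrow> bool" where
  "test_fun \<phi> \<longleftrightarrow>
     (\<forall>k. (\<lambda>x. (deriv ^^ k) \<phi> x) differentiable_on UNIV) \<and>
     (\<exists>a b. 0 < a \<and> a \<le> b \<and> b < 1 \<and> (\<forall>x. x \<notin> {a..b} \<longrightarrow> \<phi> x = 0))"

end

theory Submission
  imports Defs
begin

text \<open>Fix \<open>v\<close>, write \<open>C u = C0 A B u v\<close> and \<open>G u = exp (-u A\<^sup>T) exp (v A\<^sup>T)\<close>, so that
  \<open>G' = - A\<^sup>T G\<close> and \<open>G v = I\<close>.  On \<open>[0, v]\<close> the function \<open>C\<close> solves \<open>C' = A C + B B\<^sup>T G\<close>,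
  and on \<open>[v, 1]\<close> it solves the same system with \<open>G\<close> replaced by \<open>0\<close>.  For any such pair the
  pairing of \<open>C\<close> with the formal adjoint of \<open>L\<close> applied to \<open>\<phi>\<close> is the derivative of
  \<open>\<Psi> = M (\<phi>' C) - A\<^sup>T M (\<phi> C) - \<phi> G\<close>.  As \<open>\<phi>\<close> and \<open>\<phi>'\<close> vanish at \<open>0\<close> and \<open>1\<close>, integrating
  over both pieces leaves only the jump \<open>- \<phi> v G v = - \<phi> v I\<close> at \<open>u = v\<close>.\<close>

lemma matrix_add_rdistrib: "((A::'a::semiring_1^'n^'m) + B) ** C = A ** C + B ** C"
  by (vector matrix_matrix_mult_def sum.distrib[symmetric] field_simps)

lemma bounded_bilinear_matrix_matrix_mult:
  "bounded_bilinear ((**) :: real^'n^'m \<Rightarrow> real^'p^'n \<Rightarrow> real^'p^'m)"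
  by (simp add: bilinear_conv_bounded_bilinear[symmetric] bilinear_def linear_iff
      matrix_add_ldistrib matrix_add_rdistrib scalar_matrix_assoc matrix_scalar_ac)

interpretation matrix_mult: bounded_bilinear "(**) :: real^'n^'m \<Rightarrow> real^'p^'n \<Rightarrow> real^'p^'m"
  by (rule bounded_bilinear_matrix_matrix_mult)

lemma matrix_inv_left: "invertible A \<Longrightarrow> matrix_inv A ** A = mat 1"
  unfolding invertible_def matrix_inv_def by (rule someI2_ex) auto

lemma onorm_matrix_add_le:
  "onorm ((*v) ((A::real^'n^'m) + B)) \<le> onorm ((*v) A) + onorm ((*v) B)"
proof -
  have "(*v) (A + B) = (\<lambda>x. A *v x + B *v x)"
    by (simp add: fun_eq_iff matrix_vector_mult_add_rdistrib)
  then show ?thesis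
    using onorm_triangle[OF matrix_vector_mul_bounded_linear matrix_vector_mul_bounded_linear] by simp
qed

lemma onorm_matrix_scaleR: "onorm ((*v) (r *\<^sub>R (A::real^'n^'m))) = \<bar>r\<bar> * onorm ((*v) A)"
  using onorm_scaleR[OF matrix_vector_mul_bounded_linear, of r A]
  by (simp add: scaleR_matrix_vector_assoc)

lemma onorm_matrix_mult_le:
  "onorm ((*v) ((A::real^'n^'m) ** (B::real^'p^'n))) \<le> onorm ((*v) A) * onorm ((*v) B)"
  using onorm_compose[OF matrix_vector_mul_bounded_linear matrix_vector_mul_bounded_linear, of A B]
  by (simp add: o_def matrix_vector_mul_assoc)

lemma onorm_mat_1: "onorm ((*v) (mat 1 :: real^'n^'n)) = 1"
proof -
  have "(*v) (mat 1 :: real^'n^'n) = (\<lambda>x. x)" by (simp add: fun_eq_iff)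
  then show ?thesis by (simp add: onorm_id)
qed

lemma onorm_matrix_eq_0: "onorm ((*v) (A::real^'n^'m)) = 0 \<longleftrightarrow> A = 0"
  by (simp add: onorm_eq_0 matrix_vector_mul_bounded_linear matrix_eq)

lemma norm_le_onorm_matrix: "norm (A::real^'n^'m) \<le> real CARD('m) * real CARD('n) * onorm ((*v) A)"
proof -
  have "norm A \<le> (\<Sum>i\<in>UNIV. norm (A $ i))"
    by (simp add: norm_vec_def L2_set_le_sum)
  also have "\<dots> \<le> (\<Sum>i\<in>UNIV. \<Sum>j\<in>UNIV. \<bar>A $ i $ j\<bar>)"
    by (intro sum_mono norm_le_l1_cart)
  also have "\<dots> \<le> (\<Sum>i\<in>(UNIV::'m set). \<Sum>j\<in>(UNIV::'n set). onorm ((*v) A))"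
    by (intro sum_mono matrix_component_le_onorm)
  finally show ?thesis by simp
qed

lemma onorm_matrix_le_norm: "onorm ((*v) (A::real^'n^'m)) \<le> real CARD('m) * real CARD('n) * norm A"
proof -
  have "onorm ((*v) A) \<le> (\<Sum>i\<in>UNIV. \<Sum>j\<in>UNIV. \<bar>A $ i $ j\<bar>)"
    by (rule onorm_le_matrix_component_sum)
  also have "\<dots> \<le> (\<Sum>i\<in>(UNIV::'m set). \<Sum>j\<in>(UNIV::'n set). norm A)"
    by (intro sum_mono order_trans[OF component_le_norm_cart Finite_Cartesian_Product.norm_nth_le])
  finally show ?thesis by simp
qed

text \<open>The library's \<open>exp\<close> needs a \<open>real_normed_algebra_1\<close>, but on \<open>real^'n^'n\<close> the
  product \<open>*\<close> is componentwise and the norm is the Frobenius norm.  The copy \<open>'n sqmat\<close>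
  carries the matrix product and the operator norm instead.\<close>

typedef 'n sqmat = "UNIV :: (real^'n^'n) set" morphisms mat_of_sqmat sqmat_of_mat
  by blast

setup_lifting type_definition_sqmat

instantiation sqmat :: (finite) real_normed_algebra_1
begin

lift_definition zero_sqmat :: "'a sqmat" is 0 .
lift_definition one_sqmat :: "'a sqmat" is "mat 1" .
lift_definition plus_sqmat :: "'a sqmat \<Rightarrow> 'a sqmat \<Rightarrow> 'a sqmat" is "(+)" .
lift_definition minus_sqmat :: "'a sqmat \<Rightarrow> 'a sqmat \<Rightarrow> 'a sqmat" is "(-)" .
lift_definition uminus_sqmat :: "'a sqmat \<Rightarrow> 'a sqmat" is uminus .
lift_definition times_sqmat :: "'a sqmat \<Rightarrow> 'a sqmat \<Rightarrow> 'a sqmat" is "(**)" .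
lift_definition scaleR_sqmat :: "real \<Rightarrow> 'a sqmat \<Rightarrow> 'a sqmat" is scaleR .
lift_definition norm_sqmat :: "'a sqmat \<Rightarrow> real" is "\<lambda>A. onorm ((*v) A)" .

definition dist_sqmat :: "'a sqmat \<Rightarrow> 'a sqmat \<Rightarrow> real"
  where "dist_sqmat X Y = norm (X - Y)"

definition sgn_sqmat :: "'a sqmat \<Rightarrow> 'a sqmat"
  where "sgn_sqmat X = inverse (norm X) *\<^sub>R X"

definition uniformity_sqmat :: "('a sqmat \<times> 'a sqmat) filter"
  where "uniformity_sqmat = (INF e\<in>{0<..}. principal {(X, Y). dist X Y < e})"

definition open_sqmat :: "'a sqmat set \<Rightarrow> bool"
  where "open_sqmat U = (\<forall>X\<in>U. \<forall>\<^sub>F (X', Y) in uniformity. X' = X \<longrightarrow> Y \<in> U)"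

instance
proof
  fix X Y Z :: "'a sqmat" and r s :: real
  show "X + Y + Z = X + (Y + Z)" "X + Y = Y + X" "0 + X = X" "- X + X = 0" "X - Y = X + - Y"
    by (transfer; simp add: algebra_simps)+
  show "r *\<^sub>R (X + Y) = r *\<^sub>R X + r *\<^sub>R Y" "(r + s) *\<^sub>R X = r *\<^sub>R X + s *\<^sub>R X"
    "r *\<^sub>R s *\<^sub>R X = (r * s) *\<^sub>R X" "1 *\<^sub>R X = X"
    by (transfer; simp add: algebra_simps)+
  show "X * Y * Z = X * (Y * Z)" "(X + Y) * Z = X * Z + Y * Z" "X * (Y + Z) = X * Y + X * Z"
    "1 * X = X" "X * 1 = X" "r *\<^sub>R X * Y = r *\<^sub>R (X * Y)" "X * r *\<^sub>R Y = r *\<^sub>R (X * Y)"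
    by (transfer; simp add: matrix_mul_assoc matrix_mult.add_left matrix_mult.add_right
        matrix_mult.scaleR_left matrix_mult.scaleR_right)+
  show "(0::'a sqmat) \<noteq> 1"
    by transfer (metis onorm_mat_1 onorm_matrix_eq_0 zero_neq_one)
  show "norm X = 0 \<longleftrightarrow> X = 0" "norm (X + Y) \<le> norm X + norm Y"
    "norm (r *\<^sub>R X) = \<bar>r\<bar> * norm X" "norm (1::'a sqmat) = 1" "norm (X * Y) \<le> norm X * norm Y"
    by (transfer; simp add: onorm_matrix_eq_0 onorm_matrix_add_le onorm_matrix_scaleR
        onorm_mat_1 onorm_matrix_mult_le)+
qed (simp_all add: dist_sqmat_def sgn_sqmat_def uniformity_sqmat_def open_sqmat_def)

end

lemma bounded_linear_mat_of_sqmat: "bounded_linear mat_of_sqmat"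
proof (rule bounded_linear_intro[where K = "real CARD('n) * real CARD('n)"])
  fix X Y :: "'n::finite sqmat" and r :: real
  show "mat_of_sqmat (X + Y) = mat_of_sqmat X + mat_of_sqmat Y"
    "mat_of_sqmat (r *\<^sub>R X) = r *\<^sub>R mat_of_sqmat X"
    by (simp_all add: plus_sqmat.rep_eq scaleR_sqmat.rep_eq)
  show "norm (mat_of_sqmat X) \<le> norm X * (real CARD('n) * real CARD('n))"
    using norm_le_onorm_matrix[of "mat_of_sqmat X"] by (simp add: norm_sqmat.rep_eq mult.commute)
qed

lemma bounded_linear_sqmat_of_mat: "bounded_linear sqmat_of_mat"
proof (rule bounded_linear_intro[where K = "real CARD('n) * real CARD('n)"])
  fix A B :: "real^'n::finite^'n" and r :: real
  show "sqmat_of_mat (A + B) = sqmat_of_mat A + sqmat_of_mat B"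
    "sqmat_of_mat (r *\<^sub>R A) = r *\<^sub>R sqmat_of_mat A"
    by (simp_all add: plus_sqmat.abs_eq scaleR_sqmat.abs_eq)
  show "norm (sqmat_of_mat A) \<le> norm A * (real CARD('n) * real CARD('n))"
    using onorm_matrix_le_norm[of A] by (simp add: norm_sqmat.abs_eq mult.commute)
qed

instance sqmat :: (finite) banach
proof
  fix X :: "nat \<Rightarrow> 'a sqmat"
  assume "Cauchy X"
  then have "Cauchy (\<lambda>n. mat_of_sqmat (X n))"
    by (rule bounded_linear.Cauchy[OF bounded_linear_mat_of_sqmat])
  then obtain L where "(\<lambda>n. mat_of_sqmat (X n)) \<longlonglongrightarrow> L"
    using Cauchy_convergent convergent_def by blast
  then have "(\<lambda>n. sqmat_of_mat (mat_of_sqmat (X n))) \<longlonglongrightarrow> sqmat_of_mat L"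
    by (rule bounded_linear.tendsto[OF bounded_linear_sqmat_of_mat])
  then show "convergent X"
    by (auto simp: mat_of_sqmat_inverse convergent_def)
qed

lemma mexp_eq_exp: "mexp A = mat_of_sqmat (exp (sqmat_of_mat A))"
proof -
  have power: "mat_of_sqmat (X ^ k) = matpow (mat_of_sqmat X) k" for X :: "'n::finite sqmat" and k
    by (induction k) (simp_all add: times_sqmat.rep_eq one_sqmat.rep_eq)
  have "mat_of_sqmat (exp (sqmat_of_mat A)) = (\<Sum>k. mat_of_sqmat (sqmat_of_mat A ^ k /\<^sub>R fact k))"
    unfolding exp_def by (rule bounded_linear.suminf[OF bounded_linear_mat_of_sqmat summable_exp_generic])
  then show ?thesis
    by (simp add: mexp_def power scaleR_sqmat.rep_eq sqmat_of_mat_inverse divide_inverse)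
qed

lemma mexp_scaleR_has_vector_derivative:
  "((\<lambda>t. mexp (t *\<^sub>R A)) has_vector_derivative A ** mexp (t *\<^sub>R A)) (at t within S)"
proof -
  have "((\<lambda>t. exp (t *\<^sub>R sqmat_of_mat A)) has_vector_derivative
      sqmat_of_mat A * exp (t *\<^sub>R sqmat_of_mat A)) (at t within S)"
    using exp_scaleR_has_vector_derivative_left by (rule has_vector_derivative_at_within)
  from bounded_linear.has_vector_derivative[OF bounded_linear_mat_of_sqmat this] show ?thesis
    by (simp add: mexp_eq_exp scaleR_sqmat.abs_eq times_sqmat.rep_eq sqmat_of_mat_inverse)
qed

lemma mexp_mult_mexp_uminus: "mexp A ** mexp (- A) = mat 1"
proof -
  have "mexp (- A) = mat_of_sqmat (exp (- sqmat_of_mat A))"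
    by (simp add: mexp_eq_exp uminus_sqmat.abs_eq)
  then show ?thesis
    by (simp add: mexp_eq_exp times_sqmat.rep_eq[symmetric] exp_minus_inverse one_sqmat.rep_eq)
qed

lemma mexp_uminus_mult_mexp: "mexp (- A) ** mexp A = mat 1"
  using mexp_mult_mexp_uminus[of "- A"] by simp

lemma mexp_scaleR_continuous_on: "continuous_on S (\<lambda>t. mexp (t *\<^sub>R A))"
  using mexp_scaleR_has_vector_derivative has_vector_derivative_continuous
  by (metis continuous_on_eq_continuous_within)

lemma test_fun_has_real_derivative:
  assumes "test_fun \<phi>"
  shows "((deriv ^^ k) \<phi> has_real_derivative (deriv ^^ Suc k) \<phi> x) (at x within S)"
proof -
  have "(deriv ^^ k) \<phi> differentiable at x"
    using assms by (auto simp: test_fun_def differentiable_on_def)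
  then show ?thesis
    by (simp add: DERIV_deriv_iff_real_differentiable[symmetric] has_field_derivative_at_within)
qed

lemma test_fun_continuous_on: "test_fun \<phi> \<Longrightarrow> continuous_on S ((deriv ^^ k) \<phi>)"
  by (meson test_fun_has_real_derivative DERIV_continuous continuous_at_imp_continuous_on)

lemma test_fun_iterated_deriv_eq_0:
  assumes "test_fun \<phi>" and "x \<notin> {0<..<1}"
  shows "(deriv ^^ k) \<phi> x = 0"
proof -
  obtain a b where "0 < a" "b < 1" and supp: "\<And>y. y \<notin> {a..b} \<Longrightarrow> \<phi> y = 0"
    using assms(1) unfolding test_fun_def by blast
  with assms(2) have "x \<in> - {a..b}" by auto
  then have "\<forall>\<^sub>F y in nhds x. y \<in> - {a..b}"
    by (intro eventually_nhds_in_open) auto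
  then have "\<forall>\<^sub>F y in nhds x. \<phi> y = 0"
    by (rule eventually_mono) (simp add: supp)
  then have "(deriv ^^ k) \<phi> x = (deriv ^^ k) (\<lambda>_. 0) x"
    by (rule higher_deriv_cong_ev) simp
  also have "\<dots> = 0"
    by (induction k) (simp_all del: funpow.simps add: funpow_Suc_right)
  finally show ?thesis .
qed

lemma has_vector_derivative_matrix_mult_left [derivative_intros]:
  "(f has_vector_derivative f') F \<Longrightarrow>
    ((\<lambda>x. (X::real^'n^'m) ** (f x :: real^'p^'n)) has_vector_derivative X ** f') F"
  by (rule bounded_linear.has_vector_derivative[OF matrix_mult.bounded_linear_right])

lemma has_vector_derivative_matrix_mult_right [derivative_intros]:
  "(f has_vector_derivative f') F \<Longrightarrow>
    ((\<lambda>x. (f x :: real^'n^'m) ** (X::real^'p^'n)) has_vector_derivative f' ** X) F"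
  by (rule bounded_linear.has_vector_derivative[OF matrix_mult.bounded_linear_left])

lemma has_integral_matrix_mult_left:
  "f integrable_on S \<Longrightarrow>
    ((\<lambda>x. (X::real^'n^'m) ** (f x :: real^'p^'n)) has_integral X ** integral S f) S"
  using has_integral_linear[OF integrable_integral matrix_mult.bounded_linear_right]
  by (simp add: o_def)

lemma green_pairing_has_integral:
  fixes A M BB :: "real^'n^'n" and C G :: "real \<Rightarrow> real^'n^'n"
  assumes "a \<le> b" and "M ** BB = mat 1"
    and C': "\<And>u. u \<in> {a..b} \<Longrightarrow>
      (C has_vector_derivative A ** C u + BB ** G u) (at u within {a..b})"
    and G': "\<And>u. u \<in> {a..b} \<Longrightarrow>
      (G has_vector_derivative - transpose A ** G u) (at u within {a..b})"
    and \<phi>': "\<And>u. (\<phi> has_real_derivative \<phi>' u) (at u within {a..b})"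
    and \<phi>'': "\<And>u. (\<phi>' has_real_derivative \<phi>'' u) (at u within {a..b})"
  defines "\<Psi> \<equiv> \<lambda>u. M ** (\<phi>' u *\<^sub>R C u) - (transpose A ** M) ** (\<phi> u *\<^sub>R C u) - \<phi> u *\<^sub>R G u"
  shows "((\<lambda>u. M ** (\<phi>'' u *\<^sub>R C u) + (M ** A - transpose A ** M) ** (\<phi>' u *\<^sub>R C u)
      - (transpose A ** M ** A) ** (\<phi> u *\<^sub>R C u)) has_integral \<Psi> b - \<Psi> a) {a..b}"
proof (rule fundamental_theorem_of_calculus[OF \<open>a \<le> b\<close>])
  have cancel: "M ** BB ** X = X" "Y ** M ** BB = Y" for X Y :: "real^'n^'n"
    by (simp_all add: \<open>M ** BB = mat 1\<close> flip: matrix_mul_assoc)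
  fix u assume u: "u \<in> {a..b}"
  have "(\<Psi> has_vector_derivative
      M ** (\<phi>' u *\<^sub>R (A ** C u + BB ** G u) + \<phi>'' u *\<^sub>R C u)
      - (transpose A ** M) ** (\<phi> u *\<^sub>R (A ** C u + BB ** G u) + \<phi>' u *\<^sub>R C u)
      - (\<phi> u *\<^sub>R (- transpose A ** G u) + \<phi>' u *\<^sub>R G u)) (at u within {a..b})"
    unfolding \<Psi>_def
    by (intro derivative_intros has_vector_derivative_scaleR \<phi>' \<phi>'' C'[OF u] G'[OF u])
  then show "(\<Psi> has_vector_derivative M ** (\<phi>'' u *\<^sub>R C u) + (M ** A - transpose A ** M) **
      (\<phi>' u *\<^sub>R C u) - (transpose A ** M ** A) ** (\<phi> u *\<^sub>R C u)) (at u within {a..b})"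
    by (simp add: matrix_mult.add_right matrix_mult.diff_left matrix_mult.minus_left
        matrix_mult.scaleR_right matrix_mul_assoc cancel algebra_simps)
qed

lemma C0_0_left: "C0 A B 0 v = 0"
  by (simp add: C0_def min_def)

lemma C0_has_vector_derivative_le:
  assumes "u \<in> {0..v}"
  shows "((\<lambda>u. C0 A B u v) has_vector_derivative A ** C0 A B u v
      + (B ** transpose B) ** (mexp (- (u *\<^sub>R transpose A)) ** mexp (v *\<^sub>R transpose A)))
      (at u within {0..v})"
proof -
  define F where "F = (\<lambda>r. mexp (- (r *\<^sub>R A)) ** (B ** transpose B) ** mexp (- (r *\<^sub>R transpose A)))"
  define E K where "E w = mexp (w *\<^sub>R A)" and "K = mexp (v *\<^sub>R transpose A)" for w
  have C0_eq: "C0 A B w v = E w ** integral {0..w} F ** K" if "w \<in> {0..v}" for w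
    using that by (simp add: C0_def E_def K_def F_def min_def)
  have "continuous_on {0..v} F"
    using mexp_scaleR_continuous_on[of _ "- A"] mexp_scaleR_continuous_on[of _ "- transpose A"]
    unfolding F_def by (intro matrix_mult.continuous_on continuous_on_const) simp_all
  then have "((\<lambda>w. E w ** integral {0..w} F ** K) has_vector_derivative
      (E u ** F u + (A ** E u) ** integral {0..u} F) ** K) (at u within {0..v})"
    unfolding E_def
    by (intro derivative_intros matrix_mult.has_vector_derivative mexp_scaleR_has_vector_derivative
        integral_has_vector_derivative assms)
  moreover have "E u ** F u = (B ** transpose B) ** mexp (- (u *\<^sub>R transpose A))"
    using mexp_mult_mexp_uminus[of "u *\<^sub>R A"] by (simp add: E_def F_def matrix_mul_assoc)
  ultimately have "((\<lambda>w. E w ** integral {0..w} F ** K) has_vector_derivative A ** C0 A B u v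
      + (B ** transpose B) ** (mexp (- (u *\<^sub>R transpose A)) ** K)) (at u within {0..v})"
    using assms by (simp add: C0_eq matrix_mult.add_left matrix_mul_assoc add.commute)
  then show ?thesis
    unfolding K_def by (rule has_vector_derivative_transform[OF assms, rotated]) (simp add: C0_eq K_def)
qed

lemma C0_has_vector_derivative_ge:
  assumes "v \<le> u"
  shows "((\<lambda>u. C0 A B u v) has_vector_derivative A ** C0 A B u v) (at u within {v..})"
proof -
  define P where "P = integral {0..v} (\<lambda>r. mexp (- (r *\<^sub>R A)) ** (B ** transpose B)
    ** mexp (- (r *\<^sub>R transpose A))) ** mexp (v *\<^sub>R transpose A)"
  have C0_eq: "C0 A B w v = mexp (w *\<^sub>R A) ** P" if "w \<in> {v..}" for w
    using that by (simp add: C0_def P_def min_def matrix_mul_assoc)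
  have "((\<lambda>w. mexp (w *\<^sub>R A) ** P) has_vector_derivative A ** mexp (u *\<^sub>R A) ** P) (at u within {v..})"
    by (intro derivative_intros mexp_scaleR_has_vector_derivative)
  with assms show ?thesis
    by (intro has_vector_derivative_transform[OF _ C0_eq]) (simp_all add: C0_eq matrix_mul_assoc)
qed

lemma C0_continuous_on:
  assumes "0 \<le> v"
  shows "continuous_on {0..} (\<lambda>u. C0 A B u v)"
proof -
  have "continuous_on {0..v} (\<lambda>u. C0 A B u v)"
    using C0_has_vector_derivative_le has_vector_derivative_continuous
    by (metis continuous_on_eq_continuous_within)
  moreover have "continuous_on {v..} (\<lambda>u. C0 A B u v)"
    using C0_has_vector_derivative_ge has_vector_derivative_continuous
    by (metis atLeast_iff continuous_on_eq_continuous_within)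
  ultimately have "continuous_on ({0..v} \<union> {v..}) (\<lambda>u. C0 A B u v)"
    by (intro continuous_on_closed_Un) auto
  also have "{0..v} \<union> {v..} = {0..}"
    using assms by auto
  finally show ?thesis .
qed

lemma C0_green_pairing_has_integral:
  fixes A B M :: "real^'n^'n"
  assumes "M ** (B ** transpose B) = mat 1" and v: "v \<in> {0..1}"
    and \<phi>': "\<And>u. (\<phi> has_real_derivative \<phi>' u) (at u)"
    and \<phi>'': "\<And>u. (\<phi>' has_real_derivative \<phi>'' u) (at u)"
    and "\<phi> 0 = 0" "\<phi> 1 = 0" "\<phi>' 0 = 0" "\<phi>' 1 = 0"
  shows "((\<lambda>u. M ** (\<phi>'' u *\<^sub>R C0 A B u v) + (M ** A - transpose A ** M) ** (\<phi>' u *\<^sub>R C0 A B u v)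
      - (transpose A ** M ** A) ** (\<phi> u *\<^sub>R C0 A B u v)) has_integral - (\<phi> v *\<^sub>R mat 1)) {0..1}"
proof -
  define G where "G = (\<lambda>u. mexp (- (u *\<^sub>R transpose A)) ** mexp (v *\<^sub>R transpose A))"
  have G': "(G has_vector_derivative - transpose A ** G u) (at u within S)" for u S
    using has_vector_derivative_matrix_mult_right[OF mexp_scaleR_has_vector_derivative[of "- transpose A"]]
    unfolding G_def by (simp add: matrix_mul_assoc)
  have C0'_le: "((\<lambda>u. C0 A B u v) has_vector_derivative A ** C0 A B u v + (B ** transpose B) ** G u)
      (at u within {0..v})" if "u \<in> {0..v}" for u
    using C0_has_vector_derivative_le[OF that] by (simp add: G_def)
  have zero': "((\<lambda>_. 0) has_vector_derivative - transpose A ** 0) (at u within S)" for u S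
    by simp
  have C0'_ge: "((\<lambda>u. C0 A B u v) has_vector_derivative A ** C0 A B u v + (B ** transpose B) ** 0)
      (at u within {v..1})" if "u \<in> {v..1}" for u
    using has_vector_derivative_within_subset[OF C0_has_vector_derivative_ge[of v u A B], of "{v..1}"] that
    by auto
  note derivs = \<phi>'[THEN has_field_derivative_at_within] \<phi>''[THEN has_field_derivative_at_within]
  have "0 \<le> v" "v \<le> 1"
    using v by auto
  from has_integral_combine[OF this
      green_pairing_has_integral[OF \<open>0 \<le> v\<close> assms(1) C0'_le G' derivs]
      green_pairing_has_integral[OF \<open>v \<le> 1\<close> assms(1) C0'_ge zero' derivs]]
  show ?thesis
    using assms(5-8) mexp_uminus_mult_mexp[of "v *\<^sub>R transpose A"]
    by (simp add: C0_0_left G_def)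
qed

lemma C0_Green_identity:
  fixes A B M :: "real^'n^'n"
  assumes "M ** (B ** transpose B) = mat 1" and "v \<in> {0..1}" and "test_fun \<phi>"
  shows "M ** integral {0..1} (\<lambda>u. deriv (deriv \<phi>) u *\<^sub>R C0 A B u v)
      + (M ** A - transpose A ** M) ** integral {0..1} (\<lambda>u. deriv \<phi> u *\<^sub>R C0 A B u v)
      - (transpose A ** M ** A) ** integral {0..1} (\<lambda>u. \<phi> u *\<^sub>R C0 A B u v) = - (\<phi> v *\<^sub>R mat 1)"
proof -
  have deriv: "((deriv ^^ k) \<phi> has_real_derivative (deriv ^^ Suc k) \<phi> u) (at u)" for k u
    using test_fun_has_real_derivative[OF assms(3), of k u UNIV] by simp
  have vanish: "(deriv ^^ k) \<phi> 0 = 0" "(deriv ^^ k) \<phi> 1 = 0" for k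
    using test_fun_iterated_deriv_eq_0[OF assms(3)] by auto
  have "continuous_on {0..1} (\<lambda>u. C0 A B u v)"
    using C0_continuous_on[of v A B] assms(2) by (auto elim: continuous_on_subset)
  then have integrable: "(\<lambda>u. (deriv ^^ k) \<phi> u *\<^sub>R C0 A B u v) integrable_on {0..1}" for k
    by (intro integrable_continuous_interval continuous_on_scaleR test_fun_continuous_on assms(3))
  have "((\<lambda>u. M ** (deriv (deriv \<phi>) u *\<^sub>R C0 A B u v)
      + (M ** A - transpose A ** M) ** (deriv \<phi> u *\<^sub>R C0 A B u v)
      - (transpose A ** M ** A) ** (\<phi> u *\<^sub>R C0 A B u v)) has_integral
      M ** integral {0..1} (\<lambda>u. deriv (deriv \<phi>) u *\<^sub>R C0 A B u v)
      + (M ** A - transpose A ** M) ** integral {0..1} (\<lambda>u. deriv \<phi> u *\<^sub>R C0 A B u v)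
      - (transpose A ** M ** A) ** integral {0..1} (\<lambda>u. \<phi> u *\<^sub>R C0 A B u v)) {0..1}"
    using integrable[of 0] integrable[of 1] integrable[of 2]
    by (intro has_integral_add has_integral_diff has_integral_matrix_mult_left)
      (simp_all add: numeral_2_eq_2)
  moreover have "((\<lambda>u. M ** (deriv (deriv \<phi>) u *\<^sub>R C0 A B u v)
      + (M ** A - transpose A ** M) ** (deriv \<phi> u *\<^sub>R C0 A B u v)
      - (transpose A ** M ** A) ** (\<phi> u *\<^sub>R C0 A B u v)) has_integral - (\<phi> v *\<^sub>R mat 1)) {0..1}"
    using deriv[of 0] deriv[of 1] vanish[of 0] vanish[of 1]
    by (intro C0_green_pairing_has_integral assms(1,2)) (simp_all add: numeral_2_eq_2)
  ultimately show ?thesis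
    using has_integral_unique by blast
qed

theorem lemma3:
  fixes A B :: "real^'d^'d"
  assumes "invertible (B ** transpose B)"
  defines "M \<equiv> matrix_inv (B ** transpose B)"
  shows "\<forall>v\<in>{0<..<1}.
      (\<forall>\<phi>. test_fun \<phi> \<longrightarrow>
         M ** integral {0..1} (\<lambda>u. scaleR (deriv (deriv \<phi>) u) (C0 A B u v))
         + (M ** A - transpose A ** M) ** integral {0..1} (\<lambda>u. scaleR (deriv \<phi> u) (C0 A B u v))
         - (transpose A ** M ** A) ** integral {0..1} (\<lambda>u. scaleR (\<phi> u) (C0 A B u v))
         = - scaleR (\<phi> v) (mat 1))
    \<and> C0 A B 0 v = 0
    \<and> ((\<lambda>u. C0 A B u v) has_vector_derivative (A ** C0 A B 1 v)) (at 1 within {0..1})"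
proof (intro ballI conjI allI impI)
  fix v :: real and \<phi>
  assume v: "v \<in> {0<..<1}"
  show "test_fun \<phi> \<Longrightarrow>
      M ** integral {0..1} (\<lambda>u. deriv (deriv \<phi>) u *\<^sub>R C0 A B u v)
      + (M ** A - transpose A ** M) ** integral {0..1} (\<lambda>u. deriv \<phi> u *\<^sub>R C0 A B u v)
      - (transpose A ** M ** A) ** integral {0..1} (\<lambda>u. \<phi> u *\<^sub>R C0 A B u v) = - (\<phi> v *\<^sub>R mat 1)"
    using v unfolding M_def by (intro C0_Green_identity matrix_inv_left assms) auto
  show "C0 A B 0 v = 0"
    by (rule C0_0_left)
  have "at 1 within {v..} = at (1::real)"
    using v by (intro at_within_interior) auto
  then show "((\<lambda>u. C0 A B u v) has_vector_derivative A ** C0 A B 1 v) (at 1 within {0..1})"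
    using C0_has_vector_derivative_ge[of v 1 A B] v by (auto intro: has_vector_derivative_at_within)
qed

end
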